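(* Let $\varphi$ be an Orlicz $N$-function with Young–Fenchel transform $\psi$ and let $q_\varphi$ be the generalized inverse of the density of $\varphi$. Let $\{X_{k,n},k\ge1,n\ge1\}$ be a double array of independent $\varphi$-subgaussian random variables with $\sup_{k,n\in\mathbb N}\tau_\varphi(X_{k,n})\le1$. Let $\kappa$ be a positive increasing differentiable function whose derivative $r=\kappa'$ is non-decreasing on $(0,\infty)$, and suppose $\psi(x)-\kappa(x)\ge C_0(x)$ for some function $C_0$. Assume there is $C>0$ such that for every $k,n\ge1$ and $x>0$ $$P(X_{k,n}<x)\le\exp\left(-C\exp(-\kappa(x))\right).$$ Suppose there exist constants $A,\varepsilon_0>0$ such that for every $\varepsilon\in(0,\varepsilon_0]$ $$\int_A^{+\infty}\exp\left(-\frac{Cy}{2}\exp\left(-\kappa(\psi^{-1}(\ln y)-\varepsilon)\right)\right)dy<+\infty$$ and $$\int_A^{+\infty}\psi(y)q_\varphi(y)\exp\left(\psi(y)-\frac C2\exp\left(C_0(y)+\varepsilon r(y-\varepsilon)\right)\right)dy<+\infty.$$ Then $$\lim_{m\vee j\to+\infty}\left(\max_{1\le k\le m,1\le n\le j}X_{k,n}-\psi^{-1}(\ln(mj))\right)^-=0\quad\text{a.s.}$$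
   Context: An Orlicz $N$-function is a continuous even convex function $\varphi:\mathbb R\to\mathbb R$ with $\varphi(0)=0$, increasing on $(0,\infty)$, with $\varphi(x)/x\to0$ as $x\to0$ and $\varphi(x)/x\to+\infty$ as $x\to+\infty$. It can be written $\varphi(x)=\int_0^{|x|}p_\varphi(t)\,dt$ with non-decreasing density $p_\varphi$; its generalized inverse is $q_\varphi(t)=\sup\{u\ge0:p_\varphi(u)\le t\}$. The Young–Fenchel transform is $\psi(x)=\sup_{y\in\mathbb R}(xy-\varphi(y))$, with $\psi(x)=\int_0^{|x|}q_\varphi(t)dt$; $\psi^{-1}$ is the inverse of $\psi$ on $[0,\infty)$. A random variable $X$ is $\varphi$-subgaussian if $EX=0$ and there is a finite $a>0$ with $E\exp(tX)\le\exp(\varphi(at))$ for all $t$; $\tau_\varphi(X)=\inf\{a>0:E\exp(tX)\le\exp(\varphi(at))\ \forall t\}$. $u^-=\max(-u,0)$. $\lim_{m\vee j\to\infty}b_{m,j}=b$ means: for every $\varepsilon>0$ there is $N$ with $|b_{m,j}-b|<\varepsilon$ whenever $\max(m,j)\ge N$. *)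

theory Defs
  imports "HOL-Probability.Probability"
begin

definition orlicz_N_function :: "(real \<Rightarrow> real) \<Rightarrow> bool" where
  "orlicz_N_function \<phi> \<longleftrightarrow>
     continuous_on UNIV \<phi> \<and> (\<forall>x. \<phi> (- x) = \<phi> x) \<and> convex_on UNIV \<phi> \<and> \<phi> 0 = 0 \<and>
     strict_mono_on {0<..} \<phi> \<and>
     ((\<lambda>x. \<phi> x / x) \<longlongrightarrow> 0) (at_right 0) \<and>
     filterlim (\<lambda>x. \<phi> x / x) at_top at_top"

definition orlicz_density :: "(real \<Rightarrow> real) \<Rightarrow> (real \<Rightarrow> real) \<Rightarrow> bool" where
  "orlicz_density \<phi> p \<longleftrightarrow> mono_on {0..} p \<and> (\<forall>x. (p has_integral \<phi> x) {0..\<bar>x\<bar>})"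

definition gen_inv :: "(real \<Rightarrow> real) \<Rightarrow> real \<Rightarrow> real" where
  "gen_inv p t = Sup {u. 0 \<le> u \<and> p u \<le> t}"

definition young_fenchel :: "(real \<Rightarrow> real) \<Rightarrow> real \<Rightarrow> real" where
  "young_fenchel \<phi> x = (SUP y. x * y - \<phi> y)"

definition inv_pos :: "(real \<Rightarrow> real) \<Rightarrow> real \<Rightarrow> real" where
  "inv_pos \<psi> t = (THE x. 0 \<le> x \<and> \<psi> x = t)"

definition subg_bound :: "'a measure \<Rightarrow> (real \<Rightarrow> real) \<Rightarrow> ('a \<Rightarrow> real) \<Rightarrow> real \<Rightarrow> bool" where
  "subg_bound M \<phi> X a \<longleftrightarrow>
     (\<forall>t. integrable M (\<lambda>\<omega>. exp (t * X \<omega>)) \<and>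
          (\<integral>\<omega>. exp (t * X \<omega>) \<partial>M) \<le> exp (\<phi> (a * t)))"

definition phi_subgaussian :: "'a measure \<Rightarrow> (real \<Rightarrow> real) \<Rightarrow> ('a \<Rightarrow> real) \<Rightarrow> bool" where
  "phi_subgaussian M \<phi> X \<longleftrightarrow>
     X \<in> borel_measurable M \<and> integrable M X \<and> (\<integral>\<omega>. X \<omega> \<partial>M) = 0 \<and>
     (\<exists>a>0. subg_bound M \<phi> X a)"

definition tau_phi :: "'a measure \<Rightarrow> (real \<Rightarrow> real) \<Rightarrow> ('a \<Rightarrow> real) \<Rightarrow> real" where
  "tau_phi M \<phi> X = Inf {a. a > 0 \<and> subg_bound M \<phi> X a}"

definition neg_part :: "real \<Rightarrow> real" where
  "neg_part u = max (- u) 0"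

end

theory Submission
  imports Defs
begin

text \<open>The statement only concerns \<open>(max - \<psi>\<^sup>-\<^sup>1 (ln (m j)))\<^sup>-\<close>, so only the lower tail bound and the
  first integral condition are needed. Write \<open>B\<close> for \<open>\<psi>\<^sup>-\<^sup>1\<close> and fix \<open>\<epsilon> > 0\<close>. For \<open>i = a + c\<close> let
  \<open>E(a, c)\<close> be the event that all \<open>X k n\<close> with \<open>k \<le> 2^a\<close>, \<open>n \<le> 2^c\<close> stay below \<open>B (ln 2^i) - \<epsilon>\<close>.
  By independence and the tail bound, \<open>P(E(a, c)) \<le> exp (- C 2^i exp (- \<kappa> (B (ln 2^i) - \<epsilon>)))\<close>,
  which is at most \<open>2\<^sup>-\<^sup>i\<close> times the integral in the hypothesis. Summed over the \<open>i + 1\<close> rectangles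
  of level \<open>i\<close> this gives a convergent series, so by Borel--Cantelli almost surely only finitely
  many \<open>E(a, c)\<close> occur. Since \<open>\<psi>\<close> is superlinear, \<open>B (L + ln 4) - B L \<rightarrow> 0\<close>, so an arbitrary
  \<open>m \<times> j\<close> rectangle loses at most another \<open>\<epsilon>\<close> against the dyadic rectangle it contains.\<close>

section \<open>The Young--Fenchel transform of an N-function and its inverse\<close>

lemma orlicz_N_function_nonneg:
  assumes "orlicz_N_function \<phi>"
  shows "0 \<le> \<phi> y"
proof -
  have "convex_on UNIV \<phi>" "\<phi> (- y) = \<phi> y" "\<phi> 0 = 0"
    using assms unfolding orlicz_N_function_def by auto
  moreover from this(1) have "\<phi> ((1 - 1/2) *\<^sub>R y + (1/2) *\<^sub>R (- y)) \<le> (1 - 1/2) * \<phi> y + (1/2) * \<phi> (- y)"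
    by (rule convex_onD) auto
  ultimately show ?thesis by simp
qed

lemma bdd_above_young_fenchel:
  assumes "orlicz_N_function \<phi>"
  shows "bdd_above (range (\<lambda>y. x * y - \<phi> y))"
proof -
  have "filterlim (\<lambda>y. \<phi> y / y) at_top at_top" and even: "\<And>y. \<phi> (- y) = \<phi> y"
    using assms unfolding orlicz_N_function_def by auto
  then have "eventually (\<lambda>y. \<bar>x\<bar> \<le> \<phi> y / y) at_top"
    by (simp add: filterlim_at_top)
  then obtain Y where Y: "\<And>y. Y \<le> y \<Longrightarrow> \<bar>x\<bar> \<le> \<phi> y / y"
    by (auto simp: eventually_at_top_linorder)
  have "x * y - \<phi> y \<le> \<bar>x\<bar> * max Y 1" for y
  proof -
    have xy: "x * y \<le> \<bar>x\<bar> * \<bar>y\<bar>" by (metis abs_ge_self abs_mult)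
    show ?thesis
    proof (cases "\<bar>y\<bar> \<le> max Y 1")
      case True
      then have "\<bar>x\<bar> * \<bar>y\<bar> \<le> \<bar>x\<bar> * max Y 1" by (intro mult_left_mono) auto
      then show ?thesis using xy orlicz_N_function_nonneg[OF assms, of y] by linarith
    next
      case False
      then have "\<bar>x\<bar> * \<bar>y\<bar> \<le> \<phi> \<bar>y\<bar>" using Y[of "\<bar>y\<bar>"] by (simp add: field_simps)
      moreover have "\<phi> \<bar>y\<bar> = \<phi> y" using even by (cases "0 \<le> y") auto
      moreover have "0 \<le> \<bar>x\<bar> * max Y 1" by simp
      ultimately show ?thesis using xy by linarith
    qed
  qed
  then show ?thesis by (intro bdd_aboveI2)
qed

lemma young_fenchel_ge:
  assumes "orlicz_N_function \<phi>"
  shows "x * y - \<phi> y \<le> young_fenchel \<phi> x"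
  unfolding young_fenchel_def by (rule cSUP_upper[OF _ bdd_above_young_fenchel[OF assms]]) simp

lemma young_fenchel_le:
  assumes "\<And>y. x * y - \<phi> y \<le> b"
  shows "young_fenchel \<phi> x \<le> b"
  unfolding young_fenchel_def by (rule cSUP_least) (auto intro: assms)

lemma young_fenchel_0:
  assumes "orlicz_N_function \<phi>"
  shows "young_fenchel \<phi> 0 = 0"
proof (rule antisym)
  show "young_fenchel \<phi> 0 \<le> 0"
    by (rule young_fenchel_le) (simp add: orlicz_N_function_nonneg[OF assms])
  show "0 \<le> young_fenchel \<phi> 0"
    using young_fenchel_ge[OF assms, of 0 0] assms by (simp add: orlicz_N_function_def)
qed

text \<open>This is where \<open>\<phi> x / x \<rightarrow> 0\<close> at \<open>0\<close> is needed: some \<open>y > 0\<close> has \<open>\<phi> y < x * y\<close>.\<close>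
lemma young_fenchel_pos:
  assumes "orlicz_N_function \<phi>" "0 < x"
  shows "0 < young_fenchel \<phi> x"
proof -
  have "((\<lambda>y. \<phi> y / y) \<longlongrightarrow> 0) (at_right 0)"
    using assms(1) unfolding orlicz_N_function_def by auto
  then have "eventually (\<lambda>y. \<phi> y / y < x) (at_right 0)"
    using assms(2) by (rule order_tendstoD(2))
  then have "eventually (\<lambda>y. 0 < y \<and> \<phi> y / y < x) (at_right 0)"
    using eventually_at_right_less by (rule eventually_conj[rotated])
  then obtain y where "0 < y" "\<phi> y / y < x"
    using eventually_happens'[OF trivial_limit_at_right_real] by blast
  then have "0 < x * y - \<phi> y" by (simp add: field_simps)
  also have "\<dots> \<le> young_fenchel \<phi> x" by (rule young_fenchel_ge[OF assms(1)])
  finally show ?thesis .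
qed

lemma young_fenchel_mult_le:
  assumes "orlicz_N_function \<phi>" "0 \<le> l" "l \<le> 1"
  shows "young_fenchel \<phi> (l * x) \<le> l * young_fenchel \<phi> x"
proof (rule young_fenchel_le)
  fix y
  have "l * x * y - \<phi> y \<le> l * (x * y - \<phi> y)"
    using orlicz_N_function_nonneg[OF assms(1), of y] assms(2,3)
    by (simp add: algebra_simps mult_left_le_one_le)
  also have "\<dots> \<le> l * young_fenchel \<phi> x"
    using young_fenchel_ge[OF assms(1)] assms(2) by (intro mult_left_mono)
  finally show "l * x * y - \<phi> y \<le> l * young_fenchel \<phi> x" .
qed

lemma convex_on_young_fenchel:
  assumes "orlicz_N_function \<phi>"
  shows "convex_on UNIV (young_fenchel \<phi>)"
proof (rule convex_onI)
  fix t x z :: real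
  assume t: "0 < t" "t < 1"
  show "young_fenchel \<phi> ((1 - t) *\<^sub>R x + t *\<^sub>R z)
        \<le> (1 - t) * young_fenchel \<phi> x + t * young_fenchel \<phi> z"
  proof (rule young_fenchel_le)
    fix y
    have "((1 - t) *\<^sub>R x + t *\<^sub>R z) * y - \<phi> y = (1 - t) * (x * y - \<phi> y) + t * (z * y - \<phi> y)"
      by (simp add: algebra_simps)
    also have "\<dots> \<le> (1 - t) * young_fenchel \<phi> x + t * young_fenchel \<phi> z"
      using t young_fenchel_ge[OF assms] by (intro add_mono mult_left_mono) auto
    finally show "((1 - t) *\<^sub>R x + t *\<^sub>R z) * y - \<phi> y
        \<le> (1 - t) * young_fenchel \<phi> x + t * young_fenchel \<phi> z" .
  qed
qed simp

lemma continuous_on_young_fenchel: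
  assumes "orlicz_N_function \<phi>"
  shows "continuous_on UNIV (young_fenchel \<phi>)"
  by (rule convex_on_continuous[OF open_UNIV convex_on_young_fenchel[OF assms]])

lemma strict_mono_on_young_fenchel:
  assumes "orlicz_N_function \<phi>"
  shows "strict_mono_on {0..} (young_fenchel \<phi>)"
proof (rule strict_mono_onI)
  fix u v :: real
  assume "u \<in> {0..}" "v \<in> {0..}" "u < v"
  then have uv: "0 \<le> u / v" "u / v < 1" "0 < v" by auto
  have "young_fenchel \<phi> u = young_fenchel \<phi> (u / v * v)" using uv by simp
  also have "\<dots> \<le> u / v * young_fenchel \<phi> v"
    using uv by (intro young_fenchel_mult_le[OF assms]) auto
  also have "\<dots> < 1 * young_fenchel \<phi> v"
    using uv young_fenchel_pos[OF assms uv(3)] by (intro mult_strict_right_mono)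
  finally show "young_fenchel \<phi> u < young_fenchel \<phi> v" by simp
qed

lemma young_fenchel_surj:
  assumes "orlicz_N_function \<phi>" "0 \<le> L"
  obtains x where "0 \<le> x" "young_fenchel \<phi> x = L"
proof -
  have "\<exists>x\<ge>0. x \<le> L + \<phi> 1 \<and> young_fenchel \<phi> x = L"
  proof (rule IVT')
    show "young_fenchel \<phi> 0 \<le> L" using young_fenchel_0[OF assms(1)] assms(2) by simp
    show "L \<le> young_fenchel \<phi> (L + \<phi> 1)" using young_fenchel_ge[OF assms(1), of "L + \<phi> 1" 1] by simp
    show "0 \<le> L + \<phi> 1" using orlicz_N_function_nonneg[OF assms(1), of 1] assms(2) by simp
    show "continuous_on {0..L + \<phi> 1} (young_fenchel \<phi>)"
      using continuous_on_young_fenchel[OF assms(1)] by (rule continuous_on_subset) simp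
  qed
  then show ?thesis using that by blast
qed

lemma inv_pos_eq:
  assumes "strict_mono_on {0..} f" "0 \<le> x"
  shows "inv_pos f (f x) = x"
  unfolding inv_pos_def
  using assms strict_mono_on_eqD[OF assms(1)] by (intro the_equality) auto

lemma young_fenchel_inv_pos:
  assumes "orlicz_N_function \<phi>" "0 \<le> L"
  shows "0 \<le> inv_pos (young_fenchel \<phi>) L" "young_fenchel \<phi> (inv_pos (young_fenchel \<phi>) L) = L"
proof -
  obtain x where x: "0 \<le> x" "young_fenchel \<phi> x = L" by (rule young_fenchel_surj[OF assms])
  then have "inv_pos (young_fenchel \<phi>) L = x"
    using inv_pos_eq[OF strict_mono_on_young_fenchel[OF assms(1)] x(1)] by simp
  with x show "0 \<le> inv_pos (young_fenchel \<phi>) L" "young_fenchel \<phi> (inv_pos (young_fenchel \<phi>) L) = L"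
    by simp_all
qed

lemma le_inv_pos_young_fenchel_iff:
  assumes "orlicz_N_function \<phi>" "0 \<le> x" "0 \<le> L"
  shows "x \<le> inv_pos (young_fenchel \<phi>) L \<longleftrightarrow> young_fenchel \<phi> x \<le> L"
proof -
  have "x \<le> inv_pos (young_fenchel \<phi>) L
      \<longleftrightarrow> young_fenchel \<phi> x \<le> young_fenchel \<phi> (inv_pos (young_fenchel \<phi>) L)"
    using strict_mono_on_less_eq[OF strict_mono_on_young_fenchel[OF assms(1)]]
      young_fenchel_inv_pos(1)[OF assms(1,3)] assms(2) by simp
  then show ?thesis using young_fenchel_inv_pos(2)[OF assms(1,3)] by simp
qed

lemma mono_on_inv_pos_young_fenchel:
  assumes "orlicz_N_function \<phi>"
  shows "mono_on {0..} (inv_pos (young_fenchel \<phi>))"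
proof (rule mono_onI)
  fix L L' :: real
  assume "L \<in> {0..}" "L' \<in> {0..}" "L \<le> L'"
  then show "inv_pos (young_fenchel \<phi>) L \<le> inv_pos (young_fenchel \<phi>) L'"
    using le_inv_pos_young_fenchel_iff[OF assms, of "inv_pos (young_fenchel \<phi>) L" L']
      young_fenchel_inv_pos[OF assms, of L] by simp
qed

lemma filterlim_inv_pos_young_fenchel:
  assumes "orlicz_N_function \<phi>"
  shows "filterlim (inv_pos (young_fenchel \<phi>)) at_top at_top"
  unfolding filterlim_at_top eventually_at_top_linorder
proof
  fix z
  have "max z 0 \<le> inv_pos (young_fenchel \<phi>) L" if "max 0 (young_fenchel \<phi> (max z 0)) \<le> L" for L
    using le_inv_pos_young_fenchel_iff[OF assms, of "max z 0" L] that by simp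
  then show "\<exists>L0. \<forall>L\<ge>L0. z \<le> inv_pos (young_fenchel \<phi>) L"
    by (meson max.bounded_iff)
qed

text \<open>Since \<open>\<psi>\<close> grows superlinearly, \<open>\<psi>\<^sup>-\<^sup>1 L / L \<rightarrow> 0\<close>; together with
  \<open>\<psi>\<^sup>-\<^sup>1 (L + c) \<le> \<psi>\<^sup>-\<^sup>1 L * (L + c) / L\<close> (from \<open>\<psi> (l x) \<le> l \<psi> x\<close>) this bounds the increment.\<close>
lemma inv_pos_young_fenchel_add_le:
  assumes "orlicz_N_function \<phi>" "0 \<le> c" "0 < d"
  shows "eventually (\<lambda>L. inv_pos (young_fenchel \<phi>) (L + c) \<le> inv_pos (young_fenchel \<phi>) L + d) at_top"
proof -
  let ?\<psi> = "young_fenchel \<phi>" and ?B = "inv_pos (young_fenchel \<phi>)"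
  define K where "K = 2 * c / d + 1"
  have K: "0 < K" "2 * c \<le> K * d" using assms(2,3) unfolding K_def by (auto simp: field_simps)
  have "?B (L + c) \<le> ?B L + d" if L: "max 1 (\<phi> K) \<le> L" for L
  proof -
    have L0: "0 < L" "\<phi> K \<le> L" using L by auto
    define u v where "u = ?B L" and "v = ?B (L + c)"
    have u: "0 \<le> u" "?\<psi> u = L" and v: "0 \<le> v" "?\<psi> v = L + c"
      using young_fenchel_inv_pos[OF assms(1)] L0 assms(2) unfolding u_def v_def by auto
    have "0 < u" using u L0 young_fenchel_0[OF assms(1)] by (cases "u = 0") auto
    moreover have "u \<le> v"
      using mono_onD[OF mono_on_inv_pos_young_fenchel[OF assms(1)]] L0 assms(2)
      unfolding u_def v_def by simp
    ultimately have "L \<le> u / v * (L + c)"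
      using young_fenchel_mult_le[OF assms(1), of "u / v" v] u v by simp
    then have "L * (v - u) \<le> u * c"
      using \<open>0 < u\<close> \<open>u \<le> v\<close> by (simp add: field_simps)
    also have "u * c \<le> d * L"
    proof -
      have "u * K - \<phi> K \<le> L" using young_fenchel_ge[OF assms(1), of u K] u by simp
      then have "K * u \<le> 2 * L" using L0 by (simp add: mult.commute)
      have "K * (u * c) = (K * u) * c" by (rule mult.assoc[symmetric])
      also have "\<dots> \<le> (2 * L) * c" using \<open>K * u \<le> 2 * L\<close> assms(2) by (rule mult_right_mono)
      also have "\<dots> = (2 * c) * L" by simp
      also have "\<dots> \<le> (K * d) * L" using K L0 by (intro mult_right_mono) auto
      also have "\<dots> = K * (d * L)" by (rule mult.assoc)
      finally show ?thesis using K by simp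
    qed
    finally have "L * (v - u) \<le> L * d" by (simp add: mult.commute)
    then show ?thesis using L0 unfolding u_def v_def by simp
  qed
  then show ?thesis unfolding eventually_at_top_linorder by blast
qed

section \<open>Dyadic rectangles and Borel--Cantelli\<close>

lemma (in prob_space) prob_INT_less_le_power:
  fixes Y :: "'i \<Rightarrow> 'a \<Rightarrow> real"
  assumes ind: "indep_vars (\<lambda>_. borel) Y I" and R: "finite R" "R \<subseteq> I"
    and tail: "\<And>i. i \<in> R \<Longrightarrow> prob {\<omega> \<in> space M. Y i \<omega> < x} \<le> q"
  shows "prob (\<Inter>i\<in>R. {\<omega> \<in> space M. Y i \<omega> < x}) \<le> q ^ card R"
proof (cases "R = {}")
  case False
  have vimage_eq: "Y i -` {..<x} \<inter> space M = {\<omega> \<in> space M. Y i \<omega> < x}" for i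
    by auto
  have "prob (\<Inter>i\<in>R. Y i -` {..<x} \<inter> space M) = (\<Prod>i\<in>R. prob (Y i -` {..<x} \<inter> space M))"
    using False R by (intro indep_varsD[OF ind]) auto
  also have "\<dots> \<le> (\<Prod>i\<in>R. q)"
    using tail by (intro prod_mono) (simp add: vimage_eq)
  finally show ?thesis by (simp add: vimage_eq)
qed simp

lemma interval_mult_le_nn_integral:
  fixes f :: "real \<Rightarrow> real"
  assumes "A \<le> a" "a \<le> b" "0 \<le> g" "\<And>y. a \<le> y \<Longrightarrow> y \<le> b \<Longrightarrow> g \<le> f y"
    and fin: "(\<integral>\<^sup>+ y. ennreal (f y) * indicator {A..} y \<partial>lborel) < \<infinity>"
  shows "g * (b - a) \<le> enn2real (\<integral>\<^sup>+ y. ennreal (f y) * indicator {A..} y \<partial>lborel)"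
proof -
  have "ennreal (g * (b - a)) = (\<integral>\<^sup>+ y. ennreal g * indicator {a..b} y \<partial>lborel)"
    using assms(2,3) by (simp add: nn_integral_cmult_indicator ennreal_mult')
  also have "\<dots> \<le> (\<integral>\<^sup>+ y. ennreal (f y) * indicator {A..} y \<partial>lborel)"
  proof (rule nn_integral_mono)
    fix y
    show "ennreal g * indicator {a..b} y \<le> ennreal (f y) * indicator {A..} y"
    proof (cases "a \<le> y \<and> y \<le> b")
      case True
      then show ?thesis using assms(1,4) by (simp add: ennreal_leI indicator_def)
    next
      case False
      then have "y \<notin> {a..b}" by simp
      then show ?thesis by simp
    qed
  qed
  finally have "enn2real (ennreal (g * (b - a)))
      \<le> enn2real (\<integral>\<^sup>+ y. ennreal (f y) * indicator {A..} y \<partial>lborel)"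
    using fin by (intro enn2real_mono) auto
  then show ?thesis using assms(2,3) by simp
qed

text \<open>On the dyadic block \<open>[2^i, 2^(i+1)]\<close> the integrand is at least the tail bound of a
  \<open>2^i\<close>-fold product; this is how the integral condition pays for the Borel--Cantelli sum.\<close>
lemma dyadic_tail_bound_le_nn_integral:
  fixes B \<kappa> :: "real \<Rightarrow> real"
  assumes B: "mono_on {0..} B" and \<kappa>: "strict_mono_on {0<..} \<kappa>" and "0 < C"
    and fin: "(\<integral>\<^sup>+ y. ennreal (exp (- (C * y / 2) * exp (- \<kappa> (B (ln y) - \<epsilon>))))
               * indicator {A..} y \<partial>lborel) < \<infinity>"
    and "A \<le> 2 ^ i" and pos: "0 < B (ln (2 ^ i)) - \<epsilon>"
  shows "2 ^ i * exp (- C * 2 ^ i * exp (- \<kappa> (B (ln (2 ^ i)) - \<epsilon>)))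
    \<le> enn2real (\<integral>\<^sup>+ y. ennreal (exp (- (C * y / 2) * exp (- \<kappa> (B (ln y) - \<epsilon>))))
               * indicator {A..} y \<partial>lborel)"
proof -
  have "exp (- C * 2 ^ i * exp (- \<kappa> (B (ln (2 ^ i)) - \<epsilon>))) * (2 ^ (i + 1) - 2 ^ i)
    \<le> enn2real (\<integral>\<^sup>+ y. ennreal (exp (- (C * y / 2) * exp (- \<kappa> (B (ln y) - \<epsilon>))))
               * indicator {A..} y \<partial>lborel)"
  proof (rule interval_mult_le_nn_integral[OF \<open>A \<le> 2 ^ i\<close> _ _ _ fin])
    fix y :: real
    assume y: "2 ^ i \<le> y" "y \<le> 2 ^ (i + 1)"
    have "1 \<le> (2::real) ^ i" by simp
    then have "0 < y" "1 \<le> y" using y by linarith+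
    then have "ln (2 ^ i) \<le> ln y" "0 \<le> ln ((2::real) ^ i)" "0 \<le> ln y"
      using y by simp_all
    then have "B (ln (2 ^ i)) \<le> B (ln y)"
      by (intro mono_onD[OF B]) auto
    then have "\<kappa> (B (ln (2 ^ i)) - \<epsilon>) \<le> \<kappa> (B (ln y) - \<epsilon>)"
      using pos by (intro strict_mono_on_leD[OF \<kappa>]) auto
    then have "exp (- \<kappa> (B (ln y) - \<epsilon>)) \<le> exp (- \<kappa> (B (ln (2 ^ i)) - \<epsilon>))" by simp
    moreover have "C * y / 2 \<le> C * 2 ^ i" and "0 \<le> C * y / 2"
      using y \<open>0 < C\<close> by (auto intro: order_trans[OF zero_le_power])
    ultimately have "C * y / 2 * exp (- \<kappa> (B (ln y) - \<epsilon>)) \<le> C * 2 ^ i * exp (- \<kappa> (B (ln (2 ^ i)) - \<epsilon>))"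
      by (intro mult_mono) auto
    then show "exp (- C * 2 ^ i * exp (- \<kappa> (B (ln (2 ^ i)) - \<epsilon>)))
      \<le> exp (- (C * y / 2) * exp (- \<kappa> (B (ln y) - \<epsilon>)))" by simp
  qed auto
  then show ?thesis by (simp add: mult.commute)
qed

lemma (in prob_space) AE_eventually_dyadic_rectangles_reach:
  fixes X :: "nat \<Rightarrow> nat \<Rightarrow> 'a \<Rightarrow> real" and t :: "nat \<Rightarrow> real"
  assumes meas: "\<And>k n. 1 \<le> k \<Longrightarrow> 1 \<le> n \<Longrightarrow> X k n \<in> borel_measurable M"
    and small: "eventually (\<lambda>i. \<forall>a\<le>i. prob (\<Inter>(k, n)\<in>{1..2 ^ a} \<times> {1..2 ^ (i - a)}.
                  {\<omega> \<in> space M. X k n \<omega> < t i}) \<le> c * (1 / 2) ^ i) sequentially"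
  shows "AE \<omega> in M. eventually (\<lambda>i. \<forall>a\<le>i. \<exists>k\<in>{1..2 ^ a}. \<exists>n\<in>{1..2 ^ (i - a)}. t i \<le> X k n \<omega>)
           sequentially"
proof -
  define F where "F i a = (\<Inter>(k, n)\<in>{1..2 ^ a} \<times> {1..2 ^ (i - a)}. {\<omega> \<in> space M. X k n \<omega> < t i})"
    for i a :: nat
  define G where "G i = (\<Union>a\<le>i. F i a)" for i
  have F_events: "F i a \<in> events" for i a
    unfolding F_def using meas by (intro sets.finite_INT) (auto simp: Suc_le_eq)
  then have G_events: "G i \<in> events" for i
    unfolding G_def by auto
  have "eventually (\<lambda>i. norm (prob (G i)) \<le> c * (real (Suc i) * (1 / 2) ^ i)) sequentially"
    using small
  proof eventually_elim
    case (elim i)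
    have "prob (G i) \<le> (\<Sum>a\<le>i. prob (F i a))"
      unfolding G_def using F_events by (intro measure_subadditive_finite) auto
    also have "\<dots> \<le> (\<Sum>a\<le>i. c * (1 / 2) ^ i)"
      using elim unfolding F_def by (intro sum_mono) auto
    finally show ?case by (simp add: mult.left_commute)
  qed
  moreover have "summable (\<lambda>i. c * (real (Suc i) * (1 / 2 :: real) ^ i))"
  proof (rule summable_mult)
    have "(\<lambda>i. of_nat (Suc i) * (1 / 2 :: real) ^ i) sums (1 / (1 - 1 / 2) ^ 2)"
      by (rule geometric_deriv_sums) simp
    then show "summable (\<lambda>i. real (Suc i) * (1 / 2 :: real) ^ i)"
      by (rule sums_summable)
  qed
  ultimately have "summable (\<lambda>i. prob (G i))"
    by (rule summable_comparison_test_ev)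
  then have BC: "AE \<omega> in M. eventually (\<lambda>i. \<omega> \<in> space M - G i) sequentially"
    by (intro borel_cantelli_AE1 G_events) (simp add: emeasure_eq_measure)
  have reach: "\<forall>a\<le>i. \<exists>k\<in>{1..2 ^ a}. \<exists>n\<in>{1..2 ^ (i - a)}. t i \<le> X k n \<omega>"
    if "\<omega> \<in> space M - G i" for \<omega> i
  proof (intro allI impI)
    fix a
    assume "a \<le> i"
    then have "\<omega> \<notin> F i a" "\<omega> \<in> space M" using that unfolding G_def by auto
    then show "\<exists>k\<in>{1..2 ^ a}. \<exists>n\<in>{1..2 ^ (i - a)}. t i \<le> X k n \<omega>"
      unfolding F_def by (auto simp: not_less)
  qed
  show ?thesis using BC
  proof (rule eventually_mono)
    fix \<omega>
    assume "eventually (\<lambda>i. \<omega> \<in> space M - G i) sequentially"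
    then show "eventually (\<lambda>i. \<forall>a\<le>i. \<exists>k\<in>{1..2 ^ a}. \<exists>n\<in>{1..2 ^ (i - a)}. t i \<le> X k n \<omega>)
        sequentially"
      by (rule eventually_mono) (rule reach)
  qed
qed

lemma dyadic_bracket:
  fixes m j K :: nat
  assumes "1 \<le> m" "1 \<le> j" "2 ^ K \<le> max m j"
  obtains a c where "2 ^ a \<le> m" "2 ^ c \<le> j" "K \<le> a + c" "real (m * j) \<le> 4 * 2 ^ (a + c)"
proof -
  obtain a where a: "2 ^ a \<le> m" "m < 2 ^ (a + 1)" using ex_power_ivl1[of 2 m] assms by auto
  obtain c where c: "2 ^ c \<le> j" "j < 2 ^ (c + 1)" using ex_power_ivl1[of 2 j] assms by auto
  have "m < 2 ^ (a + c + 1)" "j < 2 ^ (a + c + 1)"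
    by (rule less_le_trans[OF a(2) power_increasing] less_le_trans[OF c(2) power_increasing]; simp)+
  then have "(2::nat) ^ K < 2 ^ (a + c + 1)" using assms(3) by auto
  then have "K \<le> a + c" using power_less_imp_less_exp[of "2::nat" K "a + c + 1"] by simp
  moreover have "m * j \<le> 2 ^ (a + 1) * 2 ^ (c + 1)" using a c by (intro mult_mono) auto
  then have "m * j \<le> 4 * 2 ^ (a + c)" by (simp add: power_add)
  then have "real (m * j) \<le> real (4 * 2 ^ (a + c))" by (rule of_nat_mono)
  ultimately show ?thesis using that a(1) c(1) by simp
qed

lemma neg_part_Max_minus_le:
  fixes x :: "nat \<Rightarrow> nat \<Rightarrow> real" and B :: "real \<Rightarrow> real"
  assumes B: "mono_on {0..} B"
    and reach: "\<And>i. K \<le> i \<Longrightarrow> \<forall>a\<le>i. \<exists>k\<in>{1..2 ^ a}. \<exists>n\<in>{1..2 ^ (i - a)}. B (ln (2 ^ i)) - \<epsilon> \<le> x k n"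
    and incr: "\<And>i. K \<le> i \<Longrightarrow> B (ln (2 ^ i) + ln 4) \<le> B (ln (2 ^ i)) + \<epsilon>"
    and mj: "1 \<le> m" "1 \<le> j" "2 ^ K \<le> max m j" and "0 \<le> \<epsilon>"
  shows "neg_part (Max {x k n | k n. k \<in> {1..m} \<and> n \<in> {1..j}} - B (ln (real (m * j)))) \<le> 2 * \<epsilon>"
proof -
  obtain a c where ac: "2 ^ a \<le> m" "2 ^ c \<le> j" "K \<le> a + c" "real (m * j) \<le> 4 * 2 ^ (a + c)"
    using dyadic_bracket[OF mj] .
  define i where "i = a + c"
  obtain k n where kn: "k \<in> {1..2 ^ a}" "n \<in> {1..2 ^ c}" and x: "B (ln (2 ^ i)) - \<epsilon> \<le> x k n"
    using reach[of i, rule_format, of a] ac(3) by (auto simp: i_def)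
  have "{x k n | k n. k \<in> {1..m} \<and> n \<in> {1..j}} = (\<lambda>(k, n). x k n) ` ({1..m} \<times> {1..j})"
    by fastforce
  then have "finite {x k n | k n. k \<in> {1..m} \<and> n \<in> {1..j}}" by simp
  moreover have "x k n \<in> {x k n | k n. k \<in> {1..m} \<and> n \<in> {1..j}}"
    using kn ac by fastforce
  ultimately have "x k n \<le> Max {x k n | k n. k \<in> {1..m} \<and> n \<in> {1..j}}"
    by (rule Max_ge)
  moreover have "B (ln (real (m * j))) \<le> B (ln (2 ^ i) + ln 4)"
  proof -
    have "1 \<le> real (m * j)" using mj by (simp add: mult_ge1_I)
    then have "ln (real (m * j)) \<le> ln (4 * 2 ^ i)" "0 \<le> ln (real (m * j))"
      using ac(4) unfolding i_def by simp_all
    then show ?thesis by (intro mono_onD[OF B]) (auto simp: ln_mult)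
  qed
  ultimately show ?thesis using x incr ac(3) \<open>0 \<le> \<epsilon>\<close> unfolding neg_part_def i_def by fastforce
qed

lemma AE_all_pos_monotone:
  fixes P :: "real \<Rightarrow> 'a \<Rightarrow> bool"
  assumes "0 < e\<^sub>0" and AE: "\<And>e. 0 < e \<Longrightarrow> e \<le> e\<^sub>0 \<Longrightarrow> AE x in M. P e x"
    and mono: "\<And>e e' x. e \<le> e' \<Longrightarrow> P e x \<Longrightarrow> P e' x"
  shows "AE x in M. \<forall>e>0. P e x"
proof -
  have "AE x in M. \<forall>l::nat. P (e\<^sub>0 / real (Suc l)) x"
    unfolding AE_all_countable using \<open>0 < e\<^sub>0\<close> by (intro allI AE) (auto simp: field_simps)
  then show ?thesis
  proof (rule eventually_mono, intro allI impI)
    fix x and e :: real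
    assume all: "\<forall>l::nat. P (e\<^sub>0 / real (Suc l)) x" and "0 < e"
    obtain l :: nat where "e\<^sub>0 / e < real l" using reals_Archimedean2 by blast
    then have "e\<^sub>0 / real (Suc l) \<le> e" using \<open>0 < e\<close> by (simp add: field_simps)
    with all show "P e x" by (blast intro: mono)
  qed
qed

lemma eventually_inv_pos_young_fenchel_dyadic:
  fixes \<phi> :: "real \<Rightarrow> real" and A :: real
  defines "B \<equiv> inv_pos (young_fenchel \<phi>)"
  assumes \<phi>: "orlicz_N_function \<phi>" and "0 < \<epsilon>"
  shows "eventually (\<lambda>i. A \<le> 2 ^ i \<and> 0 < B (ln (2 ^ i)) - \<epsilon>
           \<and> B (ln (2 ^ i) + ln 4) \<le> B (ln (2 ^ i)) + \<epsilon>) sequentially"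
proof -
  have "filterlim (\<lambda>i::nat. ln 2 * real i) at_top sequentially"
    by (intro filterlim_tendsto_pos_mult_at_top[OF tendsto_const] filterlim_real_sequentially) simp
  then have "filterlim (\<lambda>i::nat. ln (2 ^ i :: real)) at_top sequentially"
    by (simp add: ln_realpow mult.commute)
  moreover have "eventually (\<lambda>L. \<epsilon> < B L \<and> B (L + ln 4) \<le> B L + \<epsilon>) at_top"
    using filterlim_inv_pos_young_fenchel[OF \<phi>] inv_pos_young_fenchel_add_le[OF \<phi>, of "ln 4" \<epsilon>] \<open>0 < \<epsilon>\<close>
    unfolding B_def filterlim_at_top_dense by (intro eventually_conj) auto
  ultimately have "eventually (\<lambda>i. \<epsilon> < B (ln (2 ^ i)) \<and> B (ln (2 ^ i) + ln 4) \<le> B (ln (2 ^ i)) + \<epsilon>)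
      sequentially"
    by (rule eventually_compose_filterlim[rotated])
  moreover have "eventually (\<lambda>i. A \<le> (2::real) ^ i) sequentially"
  proof -
    obtain n where "A < 2 ^ n" using real_arch_pow[of 2 A] by auto
    then show ?thesis
      unfolding eventually_sequentially by (meson less_imp_le order_trans power_increasing one_le_numeral)
  qed
  ultimately show ?thesis by eventually_elim auto
qed

lemma (in prob_space) prob_dyadic_rectangle_below_le:
  fixes B \<kappa> :: "real \<Rightarrow> real" and X :: "nat \<Rightarrow> nat \<Rightarrow> 'a \<Rightarrow> real"
  assumes B: "mono_on {0..} B"
    and ind: "indep_vars (\<lambda>_. borel) (\<lambda>(k, n). X k n) ({1::nat..} \<times> {1::nat..})"
    and \<kappa>: "strict_mono_on {0<..} \<kappa>" and C: "0 < C"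
    and tail: "\<forall>k\<ge>1. \<forall>n\<ge>1. \<forall>x>0. measure M {\<omega> \<in> space M. X k n \<omega> < x} \<le> exp (- C * exp (- \<kappa> x))"
    and fin: "(\<integral>\<^sup>+ y. ennreal (exp (- (C * y / 2) * exp (- \<kappa> (B (ln y) - \<epsilon>))))
               * indicator {A..} y \<partial>lborel) < \<infinity>"
    and i: "A \<le> 2 ^ i" "0 < B (ln (2 ^ i)) - \<epsilon>" and "a \<le> i"
  shows "prob (\<Inter>(k, n)\<in>{1..2 ^ a} \<times> {1..2 ^ (i - a)}. {\<omega> \<in> space M. X k n \<omega> < B (ln (2 ^ i)) - \<epsilon>})
    \<le> enn2real (\<integral>\<^sup>+ y. ennreal (exp (- (C * y / 2) * exp (- \<kappa> (B (ln y) - \<epsilon>))))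
               * indicator {A..} y \<partial>lborel) * (1 / 2) ^ i"
proof -
  define t where "t = B (ln (2 ^ i)) - \<epsilon>"
  let ?R = "{1..2 ^ a :: nat} \<times> {1..2 ^ (i - a) :: nat}"
  have "prob (\<Inter>(k, n)\<in>?R. {\<omega> \<in> space M. X k n \<omega> < t})
      = prob (\<Inter>p\<in>?R. {\<omega> \<in> space M. (\<lambda>(k, n). X k n) p \<omega> < t})"
    by (simp add: case_prod_beta)
  also have "\<dots> \<le> exp (- C * exp (- \<kappa> t)) ^ card ?R"
    using tail i unfolding t_def by (intro prob_INT_less_le_power[OF ind]) auto
  also have "\<dots> = exp (- C * 2 ^ i * exp (- \<kappa> t))"
    using \<open>a \<le> i\<close> by (simp add: card_cartesian_product power_add[symmetric] exp_of_nat_mult[symmetric])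
  also have "\<dots> \<le> enn2real (\<integral>\<^sup>+ y. ennreal (exp (- (C * y / 2) * exp (- \<kappa> (B (ln y) - \<epsilon>))))
               * indicator {A..} y \<partial>lborel) * (1 / 2) ^ i"
    using dyadic_tail_bound_le_nn_integral[OF B \<kappa> C fin i] unfolding t_def by (simp add: field_simps)
  finally show ?thesis unfolding t_def .
qed

lemma (in prob_space) AE_neg_part_Max_minus_inv_pos_le:
  fixes \<phi> \<kappa> :: "real \<Rightarrow> real" and X :: "nat \<Rightarrow> nat \<Rightarrow> 'a \<Rightarrow> real"
  defines "B \<equiv> inv_pos (young_fenchel \<phi>)"
  assumes \<phi>: "orlicz_N_function \<phi>"
    and ind: "indep_vars (\<lambda>_. borel) (\<lambda>(k, n). X k n) ({1::nat..} \<times> {1::nat..})"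
    and \<kappa>: "strict_mono_on {0<..} \<kappa>" and C: "0 < C"
    and tail: "\<forall>k\<ge>1. \<forall>n\<ge>1. \<forall>x>0. measure M {\<omega> \<in> space M. X k n \<omega> < x} \<le> exp (- C * exp (- \<kappa> x))"
    and fin: "(\<integral>\<^sup>+ y. ennreal (exp (- (C * y / 2) * exp (- \<kappa> (B (ln y) - \<epsilon>))))
               * indicator {A..} y \<partial>lborel) < \<infinity>"
    and "0 < \<epsilon>"
  shows "AE \<omega> in M. \<exists>N. \<forall>m j. 1 \<le> m \<longrightarrow> 1 \<le> j \<longrightarrow> max m j \<ge> N \<longrightarrow>
           neg_part (Max {X k n \<omega> | k n. k \<in> {1..m} \<and> n \<in> {1..j}} - B (ln (real (m * j))))
             \<le> 2 * \<epsilon>"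
proof -
  have B: "mono_on {0..} B" unfolding B_def by (rule mono_on_inv_pos_young_fenchel[OF \<phi>])
  have good: "eventually (\<lambda>i. A \<le> 2 ^ i \<and> 0 < B (ln (2 ^ i)) - \<epsilon>
      \<and> B (ln (2 ^ i) + ln 4) \<le> B (ln (2 ^ i)) + \<epsilon>) sequentially"
    unfolding B_def by (rule eventually_inv_pos_young_fenchel_dyadic[OF \<phi> \<open>0 < \<epsilon>\<close>])
  have meas: "X k n \<in> borel_measurable M" if "1 \<le> k" "1 \<le> n" for k n
    using ind that unfolding indep_vars_def2 by auto
  have small: "eventually (\<lambda>i. \<forall>a\<le>i. prob (\<Inter>(k, n)\<in>{1..2 ^ a} \<times> {1..2 ^ (i - a)}.
      {\<omega> \<in> space M. X k n \<omega> < B (ln (2 ^ i)) - \<epsilon>})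
      \<le> enn2real (\<integral>\<^sup>+ y. ennreal (exp (- (C * y / 2) * exp (- \<kappa> (B (ln y) - \<epsilon>))))
               * indicator {A..} y \<partial>lborel) * (1 / 2) ^ i) sequentially"
    using good by eventually_elim (blast intro: prob_dyadic_rectangle_below_le[OF B ind \<kappa> C tail fin])
  show ?thesis using AE_eventually_dyadic_rectangles_reach[OF meas small]
  proof (rule eventually_mono)
    fix \<omega>
    assume "eventually (\<lambda>i. \<forall>a\<le>i. \<exists>k\<in>{1..2 ^ a}. \<exists>n\<in>{1..2 ^ (i - a)}.
        B (ln (2 ^ i)) - \<epsilon> \<le> X k n \<omega>) sequentially"
    from eventually_conj[OF this good] obtain K where K: "\<And>i. K \<le> i \<Longrightarrow>
        (\<forall>a\<le>i. \<exists>k\<in>{1..2 ^ a}. \<exists>n\<in>{1..2 ^ (i - a)}. B (ln (2 ^ i)) - \<epsilon> \<le> X k n \<omega>)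
        \<and> A \<le> 2 ^ i \<and> 0 < B (ln (2 ^ i)) - \<epsilon> \<and> B (ln (2 ^ i) + ln 4) \<le> B (ln (2 ^ i)) + \<epsilon>"
      unfolding eventually_sequentially by blast
    show "\<exists>N. \<forall>m j. 1 \<le> m \<longrightarrow> 1 \<le> j \<longrightarrow> max m j \<ge> N \<longrightarrow>
        neg_part (Max {X k n \<omega> | k n. k \<in> {1..m} \<and> n \<in> {1..j}} - B (ln (real (m * j)))) \<le> 2 * \<epsilon>"
    proof (intro exI[of _ "2 ^ K"] allI impI)
      fix m j :: nat
      assume "1 \<le> m" "1 \<le> j" "2 ^ K \<le> max m j"
      with K \<open>0 < \<epsilon>\<close> show "neg_part (Max {X k n \<omega> | k n. k \<in> {1..m} \<and> n \<in> {1..j}}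
          - B (ln (real (m * j)))) \<le> 2 * \<epsilon>"
        by (intro neg_part_Max_minus_le[OF B, where K = K]) simp_all
    qed
  qed
qed

theorem corollary2:
  fixes M :: "'a measure" and \<phi> p \<kappa> r C\<^sub>0 :: "real \<Rightarrow> real"
    and X :: "nat \<Rightarrow> nat \<Rightarrow> 'a \<Rightarrow> real" and C A \<epsilon>\<^sub>0 :: real
  assumes "prob_space M"
    and "orlicz_N_function \<phi>"
    and "orlicz_density \<phi> p"
    and "prob_space.indep_vars M (\<lambda>_. borel) (\<lambda>(k, n). X k n) ({1::nat..} \<times> {1::nat..})"
    and "\<forall>k\<ge>1. \<forall>n\<ge>1. phi_subgaussian M \<phi> (X k n)"
    and "\<forall>k\<ge>1. \<forall>n\<ge>1. tau_phi M \<phi> (X k n) \<le> 1"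
    and "\<forall>x>0. \<kappa> x > 0"
    and "strict_mono_on {0<..} \<kappa>"
    and "\<forall>x>0. (\<kappa> has_real_derivative r x) (at x)"
    and "mono_on {0<..} r"
    and "\<forall>x>0. young_fenchel \<phi> x - \<kappa> x \<ge> C\<^sub>0 x"
    and "C > 0"
    and "\<forall>k\<ge>1. \<forall>n\<ge>1. \<forall>x>0.
           measure M {\<omega> \<in> space M. X k n \<omega> < x} \<le> exp (- C * exp (- \<kappa> x))"
    and "A > 0" and "\<epsilon>\<^sub>0 > 0"
    and "\<forall>\<epsilon>\<in>{0<..\<epsilon>\<^sub>0}.
           (\<integral>\<^sup>+ y. ennreal (exp (- (C * y / 2) *
               exp (- \<kappa> (inv_pos (young_fenchel \<phi>) (ln y) - \<epsilon>)))) * indicator {A..} y \<partial>lborel)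
           < \<infinity>"
    and "\<forall>\<epsilon>\<in>{0<..\<epsilon>\<^sub>0}.
           (\<integral>\<^sup>+ y. ennreal (young_fenchel \<phi> y * gen_inv p y *
               exp (young_fenchel \<phi> y - C / 2 * exp (C\<^sub>0 y + \<epsilon> * r (y - \<epsilon>))))
             * indicator {A..} y \<partial>lborel)
           < \<infinity>"
  shows "AE \<omega> in M. \<forall>e>0. \<exists>N. \<forall>m j. 1 \<le> m \<longrightarrow> 1 \<le> j \<longrightarrow> max m j \<ge> N \<longrightarrow>
           \<bar>neg_part (Max {X k n \<omega> | k n. k \<in> {1..m} \<and> n \<in> {1..j}}
                      - inv_pos (young_fenchel \<phi>) (ln (real (m * j)))) - 0\<bar> < e"
proof -
  interpret prob_space M by (rule assms(1))
  let ?gap = "\<lambda>m j \<omega>. neg_part (Max {X k n \<omega> | k n. k \<in> {1..m} \<and> n \<in> {1..j}}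
                      - inv_pos (young_fenchel \<phi>) (ln (real (m * j))))"
  have "AE \<omega> in M. \<forall>e>0. \<exists>N. \<forall>m j. 1 \<le> m \<longrightarrow> 1 \<le> j \<longrightarrow> max m j \<ge> N \<longrightarrow> ?gap m j \<omega> \<le> e"
  proof (rule AE_all_pos_monotone[OF \<open>0 < \<epsilon>\<^sub>0\<close>])
    fix e :: real
    assume "0 < e" "e \<le> \<epsilon>\<^sub>0"
    then have "e / 2 \<in> {0<..\<epsilon>\<^sub>0}" by simp
    from AE_neg_part_Max_minus_inv_pos_le[OF assms(2,4,8,12,13) assms(16)[rule_format, OF this]] \<open>0 < e\<close>
    show "AE \<omega> in M. \<exists>N. \<forall>m j. 1 \<le> m \<longrightarrow> 1 \<le> j \<longrightarrow> max m j \<ge> N \<longrightarrow> ?gap m j \<omega> \<le> e"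
      by simp
  qed (meson order_trans)
  then show ?thesis
  proof (rule eventually_mono, intro allI impI)
    fix \<omega> and e :: real
    assume "\<forall>e>0. \<exists>N. \<forall>m j. 1 \<le> m \<longrightarrow> 1 \<le> j \<longrightarrow> max m j \<ge> N \<longrightarrow> ?gap m j \<omega> \<le> e" "0 < e"
    then obtain N where N: "\<And>m j. 1 \<le> m \<Longrightarrow> 1 \<le> j \<Longrightarrow> max m j \<ge> N \<Longrightarrow> ?gap m j \<omega> \<le> e / 2"
      by (meson half_gt_zero)
    have "\<bar>?gap m j \<omega> - 0\<bar> < e" if "1 \<le> m" "1 \<le> j" "max m j \<ge> N" for m j
    proof -
      have "\<bar>?gap m j \<omega> - 0\<bar> = ?gap m j \<omega>" by (simp add: neg_part_def)
      then show ?thesis using N[OF that] \<open>0 < e\<close> by linarith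
    qed
    then show "\<exists>N. \<forall>m j. 1 \<le> m \<longrightarrow> 1 \<le> j \<longrightarrow> max m j \<ge> N \<longrightarrow> \<bar>?gap m j \<omega> - 0\<bar> < e"
      by blast
  qed
qed

end
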